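(* Let $\alpha\in\mathbb{Z}_2^n$ with $\alpha_{n-1}=0$. Then $\mathrm{adp}^{\oplus}(\overline{\alpha},\overline{\alpha}\to0)\le\mathrm{adp}^{\oplus}(\alpha,\alpha\to0)$.
   Context: For $x\in\mathbb{Z}_2^n$, $x=(x_0,\dots,x_{n-1})$ is identified with the integer $\sum_i x_i2^{n-1-i}$ ($x_{n-1}$ least significant); $+$ is addition modulo $2^n$, $\oplus$ is bitwise XOR, $\overline{x}$ is the bitwise complement. $\mathrm{adp}^{\oplus}(\alpha,\beta\to\gamma)=4^{-n}\#\{(x,y)\in(\mathbb{Z}_2^n)^2: (x+\alpha)\oplus(y+\beta)=(x\oplus y)+\gamma\}$. *)

theory Defs
  imports Complex_Main
begin

text \<open>Elements of Z_2^n are identified with naturals in {0..<2^n} (bit x_i is the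
coefficient of 2^(n-1-i), so x_(n-1) is the least significant bit).\<close>

definition addn :: "nat \<Rightarrow> nat \<Rightarrow> nat \<Rightarrow> nat" where
  "addn n x y = (x + y) mod 2 ^ n"

definition compl_n :: "nat \<Rightarrow> nat \<Rightarrow> nat" where
  "compl_n n x = (2 ^ n - 1) - x"

definition adp_xor :: "nat \<Rightarrow> nat \<Rightarrow> nat \<Rightarrow> nat \<Rightarrow> real" where
  "adp_xor n a b g =
     real (card {(x, y). x < 2 ^ n \<and> y < 2 ^ n \<and>
        xor (addn n x a) (addn n y b) = addn n (xor x y) g}) / 4 ^ n"

end

theory Submission
  imports Defs
begin

text \<open>Let carry_count m a c d be the number of pairs (x, y) of m-bit words with
(x + a + c) xor (y + a + d) = x xor y modulo 2^m, where c and d are carries entering at the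
least significant bit; adp(a, a \<rightarrow> 0) is carry_count n a 0 0 / 4^n. Looking at the least
significant bit, the two carries must agree, and the count for a with carry c is
four times the count for a div 2 with the same carry if the low bit of a equals c, and otherwise
the sum of the counts with carries 0 and 1 (each pair of low bits of x and y passes its own
carry on). Since complementing a flips its low bit, this recursion shows that complementing a
exchanges carries 0 and 1, so adp(\<not>\<alpha>, \<not>\<alpha> \<rightarrow> 0) is the count for \<alpha> with carry 1.
By induction the carry-1 count is at most three times the carry-0 count, and for even \<alpha> one
more step of the recursion improves this to the claim.\<close>

lemma sum_lessThan_double:
  "(\<Sum>x<2 * n. f x) = (\<Sum>x<n. \<Sum>e<2. f (2 * x + e))" for f :: "nat \<Rightarrow> 'a::comm_monoid_add"
  by (induction n) (auto simp: numeral_2_eq_2 lessThan_Suc add_ac)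

lemma double_add_mod_pow_Suc:
  fixes u e :: nat
  assumes "e < 2"
  shows "(2 * u + e) mod 2 ^ Suc k = 2 * (u mod 2 ^ k) + e"
  using assms mod_mult2_eq[of "2 * u + e" 2 "2 ^ k"] by simp

lemma xor_double_add:
  fixes u v e f :: nat
  assumes "e < 2" "f < 2"
  shows "xor (2 * u + e) (2 * v + f) = 2 * xor u v + of_bool (e \<noteq> f)"
  using assms by (subst xor_rec) (auto simp: less_2_cases_iff)

lemma double_add_of_bool_eq_iff:
  "2 * p + of_bool s = 2 * q + of_bool t \<longleftrightarrow> p = q \<and> s = t" for p q :: nat
  by (cases s; cases t; simp) presburger+

lemma card_pairs_eq_sum_of_bool:
  "card {(x, y). x < N \<and> y < N \<and> P x y} = (\<Sum>x<N. \<Sum>y<N. of_bool (P x y))" for N :: nat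
proof -
  have "(\<Sum>x<N. \<Sum>y<N. of_bool (P x y) :: nat) = (\<Sum>(x, y)\<in>{..<N} \<times> {..<N}. of_bool (P x y))"
    by (rule sum.cartesian_product)
  also have "\<dots> = card ({..<N} \<times> {..<N} \<inter> {(x, y). P x y})"
    by (simp add: case_prod_unfold)
  also have "{..<N} \<times> {..<N} \<inter> {(x, y). P x y} = {(x, y). x < N \<and> y < N \<and> P x y}"
    by auto
  finally show ?thesis ..
qed

lemma carry_step_iff:
  fixes x y x0 y0 a c d :: nat
  assumes "x0 < 2" "y0 < 2" "c \<le> 1" "d \<le> 1"
  defines "c' \<equiv> (x0 + a mod 2 + c) div 2" and "d' \<equiv> (y0 + a mod 2 + d) div 2"
  shows "xor ((2 * x + x0 + a + c) mod 2 ^ Suc k) ((2 * y + y0 + a + d) mod 2 ^ Suc k)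
           = xor (2 * x + x0) (2 * y + y0)
    \<longleftrightarrow> c = d \<and> xor ((x + a div 2 + c') mod 2 ^ k) ((y + a div 2 + d') mod 2 ^ k) = xor x y"
proof -
  define e f where "e = (x0 + a mod 2 + c) mod 2" and "f = (y0 + a mod 2 + d) mod 2"
  have "2 * x + x0 + a + c = 2 * (x + a div 2 + c') + e"
       "2 * y + y0 + a + d = 2 * (y + a div 2 + d') + f"
    unfolding c'_def d'_def e_def f_def by simp_all
  moreover have "e < 2" "f < 2"
    unfolding e_def f_def by simp_all
  moreover have "(e \<noteq> f) = (x0 \<noteq> y0) \<longleftrightarrow> c = d"
    unfolding e_def f_def using assms(1-4) by (auto simp: less_2_cases_iff le_Suc_eq mod2_eq_if)
  ultimately show ?thesis
    using assms(1,2)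
    by (simp only: double_add_mod_pow_Suc xor_double_add double_add_of_bool_eq_iff) blast
qed

definition carry_count :: "nat \<Rightarrow> nat \<Rightarrow> nat \<Rightarrow> nat \<Rightarrow> nat" where
  "carry_count m a c d =
     (\<Sum>x<2 ^ m. \<Sum>y<2 ^ m. of_bool (xor ((x + a + c) mod 2 ^ m) ((y + a + d) mod 2 ^ m) = xor x y))"

lemma carry_count_Suc:
  assumes "c \<le> 1" "d \<le> 1"
  shows "carry_count (Suc k) a c d =
    (if c = d then (\<Sum>e<2. \<Sum>f<2.
       carry_count k (a div 2) ((e + a mod 2 + c) div 2) ((f + a mod 2 + d) div 2)) else 0)"
proof -
  let ?P = "\<lambda>x e y f. xor ((x + a div 2 + (e + a mod 2 + c) div 2) mod 2 ^ k)
                           ((y + a div 2 + (f + a mod 2 + d) div 2) mod 2 ^ k) = xor x y"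
  have "carry_count (Suc k) a c d = (\<Sum>x<2^k. \<Sum>e<2. \<Sum>y<2^k. \<Sum>f<2. of_bool (c = d \<and> ?P x e y f))"
    unfolding carry_count_def power_Suc sum_lessThan_double
    using carry_step_iff[OF _ _ assms] by (intro sum.cong refl) simp
  also have "\<dots> = (\<Sum>e<2. \<Sum>f<2. \<Sum>x<2^k. \<Sum>y<2^k. of_bool (c = d \<and> ?P x e y f))"
    by (simp add: numeral_2_eq_2 lessThan_Suc sum.distrib del: sum_of_bool_eq)
  finally show ?thesis
    by (cases "c = d") (simp_all add: carry_count_def del: sum_of_bool_eq)
qed

lemma carry_count_0 [simp]: "carry_count 0 a c d = 1"
  by (simp add: carry_count_def)

lemma carry_count_unequal:
  "c \<le> 1 \<Longrightarrow> d \<le> 1 \<Longrightarrow> c \<noteq> d \<Longrightarrow> carry_count m a c d = of_bool (m = 0)"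
  by (cases m) (simp_all add: carry_count_Suc)

lemma carry_count_Suc_stable:
  assumes "a mod 2 = c"
  shows "carry_count (Suc k) a c c = 4 * carry_count k (a div 2) c c"
proof -
  have "c = 0 \<or> c = 1"
    using assms by auto
  then show ?thesis
    using assms by (elim disjE) (simp_all add: carry_count_Suc lessThan_nat_numeral)
qed

text \<open>The term 2 * of_bool (k = 0) collects the mixed-carry counts, which vanish unless k = 0.\<close>

lemma carry_count_Suc_mixing:
  assumes "c \<le> 1" "a mod 2 \<noteq> c"
  shows "carry_count (Suc k) a c c =
    carry_count k (a div 2) 0 0 + carry_count k (a div 2) 1 1 + 2 * of_bool (k = 0)"
proof -
  have "a mod 2 + c = 1"
    using assms by (auto simp: le_Suc_eq mod2_eq_if split: if_splits)
  then show ?thesis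
    using assms(1) carry_count_unequal[of 0 1 k "a div 2"] carry_count_unequal[of 1 0 k "a div 2"]
    by (simp add: carry_count_Suc lessThan_nat_numeral add.assoc)
qed

lemma adp_xor_eq_carry_count: "adp_xor n a a 0 = carry_count n a 0 0 / 4 ^ n"
proof -
  have "addn n (xor x y) 0 = xor x y" if "x < 2 ^ n" "y < 2 ^ n" for x y
    using that by (simp add: addn_def flip: take_bit_eq_mod add: take_bit_xor take_bit_nat_eq_self)
  then have sols: "{(x, y). x < 2 ^ n \<and> y < 2 ^ n \<and> xor (addn n x a) (addn n y a) = addn n (xor x y) 0}
      = {(x, y). x < 2 ^ n \<and> y < 2 ^ n \<and> xor ((x + a) mod 2 ^ n) ((y + a) mod 2 ^ n) = xor x y}"
    by (auto simp: addn_def)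
  show ?thesis
    unfolding adp_xor_def sols card_pairs_eq_sum_of_bool carry_count_def by simp
qed

lemma carry_count_carry_le: "carry_count m a 1 1 \<le> 3 * carry_count m a 0 0"
proof (induction m arbitrary: a)
  case 0
  then show ?case by simp
next
  case (Suc k)
  have "carry_count k (a div 2) 1 1 \<le> 3 * carry_count k (a div 2) 0 0"
    by (rule Suc.IH)
  then show ?case
    by (cases "a mod 2 = 0")
       (auto simp: carry_count_Suc_stable carry_count_Suc_mixing)
qed

lemma carry_count_carry_le_even:
  assumes "even a"
  shows "carry_count (Suc k) a 1 1 \<le> carry_count (Suc k) a 0 0"
  using assms carry_count_carry_le[of k "a div 2"]
  by (cases "k = 0") (auto simp: carry_count_Suc_stable carry_count_Suc_mixing)

lemma compl_n_Suc_div_mod: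
  assumes "a < 2 ^ Suc k"
  shows "compl_n (Suc k) a div 2 = compl_n k (a div 2)"
    and "compl_n (Suc k) a mod 2 = 1 - a mod 2"
proof -
  define r where "r = 1 - a mod 2"
  have "a = 2 * (a div 2) + a mod 2" "a mod 2 < 2" "a < 2 * 2 ^ k"
    using assms by simp_all
  then have "compl_n (Suc k) a = 2 * compl_n k (a div 2) + r" "r < 2"
    unfolding compl_n_def power_Suc r_def by linarith+
  then show "compl_n (Suc k) a div 2 = compl_n k (a div 2)" "compl_n (Suc k) a mod 2 = 1 - a mod 2"
    unfolding r_def[symmetric] by simp_all
qed

lemma carry_count_compl:
  assumes "a < 2 ^ m" "c \<le> 1"
  shows "carry_count m (compl_n m a) c c = carry_count m a (1 - c) (1 - c)"
  using assms
proof (induction m arbitrary: a c)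
  case 0
  then show ?case by simp
next
  case (Suc k)
  have IH: "carry_count k (compl_n k (a div 2)) c' c' = carry_count k (a div 2) (1 - c') (1 - c')"
    if "c' \<le> 1" for c'
    using Suc.prems that by (intro Suc.IH) auto
  have "compl_n (Suc k) a mod 2 = c \<longleftrightarrow> a mod 2 = 1 - c"
    using compl_n_Suc_div_mod(2)[OF Suc.prems(1)] Suc.prems(2) by auto
  then show ?case
    using compl_n_Suc_div_mod(1)[OF Suc.prems(1)] Suc.prems(2) IH[of 0] IH[of 1] IH[of c]
    by (cases "a mod 2 = 1 - c") (auto simp: carry_count_Suc_stable carry_count_Suc_mixing)
qed

theorem lemma5:
  fixes n \<alpha> :: nat
  assumes "0 < n" and "\<alpha> < 2 ^ n" and "\<not> bit \<alpha> 0"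
  shows "adp_xor n (compl_n n \<alpha>) (compl_n n \<alpha>) 0 \<le> adp_xor n \<alpha> \<alpha> 0"
proof -
  obtain k where n: "n = Suc k"
    using assms(1) gr0_implies_Suc by blast
  have "carry_count n (compl_n n \<alpha>) 0 0 = carry_count n \<alpha> 1 1"
    using carry_count_compl[OF assms(2), of 0] by simp
  also have "\<dots> \<le> carry_count n \<alpha> 0 0"
    unfolding n using assms(3) by (intro carry_count_carry_le_even) (simp add: bit_0)
  finally show ?thesis
    unfolding adp_xor_eq_carry_count by (simp add: divide_right_mono)
qed

end
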